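(* Let $(\mathfrak{g},[\cdot,\cdot]_{\mathfrak{g}},\phi_{\mathfrak{g}})$ be a Hom-Lie algebra, $(V,\beta,\rho)$ a weakly involutive representation of it ($V$ finite-dimensional), and $T:V\to\mathfrak g$ a linear map satisfying $T\beta=\phi_{\mathfrak g}T$. If $T$ is an $\mathcal O$-operator associated to $(V,\beta,\rho)$, then $r=\overline T-\sigma(\overline T)$ is a solution of the classical Hom-Yang-Baxter equation $[r,r]=0$ in the Hom-Lie algebra $\mathfrak g\ltimes_{\rho^\circ}V^*$.
   Context: A Hom-Lie algebra $(\mathfrak{h},[\cdot,\cdot]_{\mathfrak{h}},\phi_{\mathfrak{h}})$: skew-symmetric bilinear bracket and linear map with $\phi_{\mathfrak h}[x,y]=[\phi_{\mathfrak h}x,\phi_{\mathfrak h}y]$ and $[\phi_{\mathfrak h}(x),[y,z]]+[\phi_{\mathfrak h}(y),[z,x]]+[\phi_{\mathfrak h}(z),[x,y]]=0$. A representation $(V,\beta,\rho)$ of $\mathfrak g$: $\beta\in\mathfrak{gl}(V)$, $\rho:\mathfrak g\to\mathfrak{gl}(V)$ linear with $\rho(\phi_{\mathfrak g}(x))\beta=\beta\rho(x)$ and $\rho([x,y]_{\mathfrak g})\beta=\rho(\phi_{\mathfrak g}(x))\rho(y)-\rho(\phi_{\mathfrak g}(y))\rho(x)$; it is weakly involutive if $\rho(\phi_{\mathfrak g}^2(x))=\rho(x)$ for all $x$. Define $\rho^\circ:\mathfrak g\to\mathfrak{gl}(V^* )$ by $\langle\rho^\circ(x)\xi,v\rangle=-\langle\xi,\rho(\phi_{\mathfrak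 g}(x))v\rangle$; when $\rho$ is weakly involutive, $(V^*,\beta^*,\rho^\circ)$ is a representation. The semidirect product $\mathfrak g\ltimes_{\rho^\circ}V^*$ is $\mathfrak g\oplus V^*$ with bracket $[(x,\xi),(y,\eta)]=([x,y]_{\mathfrak g},\rho^\circ(x)\eta-\rho^\circ(y)\xi)$ and twisting map $\phi_{\mathfrak g}\oplus\beta^*$. An $\mathcal O$-operator associated to $(V,\beta,\rho)$ is a linear map $T:V\to\mathfrak g$ with $T\beta=\phi_{\mathfrak g}T$ and $[T(u),T(v)]_{\mathfrak g}=T(\rho(T(u))v-\rho(T(v))u)$ for all $u,v\in V$. With $\{v_i\}$ a basis of $V$ and $\{v^i\}$ the dual basis, $\overline T=\sum_iv^i\otimes T(v_i)\in(\mathfrak g\oplus V^* )^{\otimes2}$, and $\sigma$ is the flip of tensor factors. For a Hom-Lie algebra $(\mathfrak h,[\cdot,\cdot],\phi)$ and $r=\sum_ix_i\otimes y_i\in\mathfrak h\otimes\mathfrak h$, $[r,r]=\sum_{i,j}\big([x_i,x_j]\otimes\phi(y_i)\otimes\phi(y_j)+\phi(x_i)\otimes[y_i,x_j]\otimes\phi(y_j)+\phi(x_i)\otimes\phi(x_j)\otimes[y_i,y_j]\big)$; the classical Hom-Yang-Baxter equation is $[r,r]=0$. *)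

theory Defs
  imports Main "HOL.Vector_Spaces" "HOL-Library.Function_Algebras" "HOL-Library.Product_Plus"
begin

text \<open>The finite-dimensional representation
 space V is realised in coordinates as 'n \<Rightarrow> 'k ('n a finite index type); its
 standard basis e_i is the basis v_i, and V* is realised as 'n \<Rightarrow> 'k via the
 pairing \<langle>xi, v\<rangle> = sum_i xi i * v i, so the dual basis v^i is again e_i.\<close>

definition klinear :: "('k \<Rightarrow> 'a \<Rightarrow> 'a) \<Rightarrow> ('k \<Rightarrow> 'b \<Rightarrow> 'b) \<Rightarrow> ('a::ab_group_add \<Rightarrow> 'b::ab_group_add) \<Rightarrow> bool" where
  "klinear s1 s2 f \<longleftrightarrow> (\<forall>x y. f (x + y) = f x + f y) \<and> (\<forall>c x. f (s1 c x) = s2 c (f x))"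

definition vscale :: "'k::field \<Rightarrow> ('n \<Rightarrow> 'k) \<Rightarrow> ('n \<Rightarrow> 'k)" where
  "vscale c v = (\<lambda>i. c * v i)"

definition ebas :: "'n \<Rightarrow> ('n \<Rightarrow> 'k::field)" where
  "ebas i = (\<lambda>j. if j = i then 1 else 0)"

definition pairing :: "('n::finite \<Rightarrow> 'k::field) \<Rightarrow> ('n \<Rightarrow> 'k) \<Rightarrow> 'k" where
  "pairing xi v = (\<Sum>i\<in>UNIV. xi i * v i)"

definition hom_lie_algebra ::
  "('k::field \<Rightarrow> 'g \<Rightarrow> 'g) \<Rightarrow> ('g::ab_group_add \<Rightarrow> 'g \<Rightarrow> 'g) \<Rightarrow> ('g \<Rightarrow> 'g) \<Rightarrow> bool" where
  "hom_lie_algebra sc br phi \<longleftrightarrow>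
     vector_space sc \<and>
     (\<forall>y. klinear sc sc (\<lambda>x. br x y)) \<and> (\<forall>x. klinear sc sc (\<lambda>y. br x y)) \<and>
     (\<forall>x y. br x y = - br y x) \<and>
     klinear sc sc phi \<and>
     (\<forall>x y. phi (br x y) = br (phi x) (phi y)) \<and>
     (\<forall>x y z. br (phi x) (br y z) + br (phi y) (br z x) + br (phi z) (br x y) = 0)"

definition hom_rep ::
  "('k::field \<Rightarrow> 'g \<Rightarrow> 'g) \<Rightarrow> ('g::ab_group_add \<Rightarrow> 'g \<Rightarrow> 'g) \<Rightarrow> ('g \<Rightarrow> 'g)
   \<Rightarrow> (('n \<Rightarrow> 'k) \<Rightarrow> ('n \<Rightarrow> 'k)) \<Rightarrow> ('g \<Rightarrow> ('n \<Rightarrow> 'k) \<Rightarrow> ('n \<Rightarrow> 'k)) \<Rightarrow> bool" where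
  "hom_rep sc br phi beta rho \<longleftrightarrow>
     klinear vscale vscale beta \<and>
     (\<forall>x. klinear vscale vscale (rho x)) \<and>
     (\<forall>x y v. rho (x + y) v = rho x v + rho y v) \<and>
     (\<forall>c x v. rho (sc c x) v = vscale c (rho x v)) \<and>
     (\<forall>x. rho (phi x) \<circ> beta = beta \<circ> rho x) \<and>
     (\<forall>x y. rho (br x y) \<circ> beta = (\<lambda>v. rho (phi x) (rho y v) - rho (phi y) (rho x v)))"

definition weakly_involutive :: "('g \<Rightarrow> 'g) \<Rightarrow> ('g \<Rightarrow> 'v \<Rightarrow> 'v) \<Rightarrow> bool" where
  "weakly_involutive phi rho \<longleftrightarrow> (\<forall>x. rho (phi (phi x)) = rho x)"

text \<open>Dual representation rho-circ and dual map beta*, on V* = 'n \<Rightarrow> 'k, defined by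
  \<langle>rho_circ x xi, v\<rangle> = - \<langle>xi, rho (phi x) v\<rangle> and \<langle>beta* xi, v\<rangle> = \<langle>xi, beta v\<rangle>
  (evaluated on the basis vectors v = e_j).\<close>
definition rho_circ :: "('g \<Rightarrow> 'g) \<Rightarrow> ('g \<Rightarrow> ('n::finite \<Rightarrow> 'k::field) \<Rightarrow> ('n \<Rightarrow> 'k))
    \<Rightarrow> 'g \<Rightarrow> ('n \<Rightarrow> 'k) \<Rightarrow> ('n \<Rightarrow> 'k)" where
  "rho_circ phi rho x xi = (\<lambda>j. - pairing xi (rho (phi x) (ebas j)))"

definition dual_map :: "(('n::finite \<Rightarrow> 'k::field) \<Rightarrow> ('n \<Rightarrow> 'k)) \<Rightarrow> ('n \<Rightarrow> 'k) \<Rightarrow> ('n \<Rightarrow> 'k)" where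
  "dual_map beta xi = (\<lambda>j. pairing xi (beta (ebas j)))"

definition sd_scale :: "('k::field \<Rightarrow> 'g \<Rightarrow> 'g) \<Rightarrow> 'k \<Rightarrow> 'g \<times> ('n \<Rightarrow> 'k) \<Rightarrow> 'g \<times> ('n \<Rightarrow> 'k)" where
  "sd_scale sc c p = (sc c (fst p), vscale c (snd p))"

definition sd_bracket :: "('g \<Rightarrow> 'g \<Rightarrow> 'g) \<Rightarrow> ('g \<Rightarrow> 'g) \<Rightarrow> ('g \<Rightarrow> ('n::finite \<Rightarrow> 'k::field) \<Rightarrow> ('n \<Rightarrow> 'k))
   \<Rightarrow> 'g \<times> ('n \<Rightarrow> 'k) \<Rightarrow> 'g \<times> ('n \<Rightarrow> 'k) \<Rightarrow> 'g \<times> ('n \<Rightarrow> 'k)" where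
  "sd_bracket br phi rho p q =
     (br (fst p) (fst q), rho_circ phi rho (fst p) (snd q) - rho_circ phi rho (fst q) (snd p))"

definition sd_twist :: "('g \<Rightarrow> 'g) \<Rightarrow> (('n::finite \<Rightarrow> 'k::field) \<Rightarrow> ('n \<Rightarrow> 'k))
   \<Rightarrow> 'g \<times> ('n \<Rightarrow> 'k) \<Rightarrow> 'g \<times> ('n \<Rightarrow> 'k)" where
  "sd_twist phi beta p = (phi (fst p), dual_map beta (snd p))"

definition O_operator :: "('g::ab_group_add \<Rightarrow> 'g \<Rightarrow> 'g) \<Rightarrow> ('g \<Rightarrow> 'g)
   \<Rightarrow> (('n \<Rightarrow> 'k) \<Rightarrow> ('n \<Rightarrow> 'k::field)) \<Rightarrow> ('g \<Rightarrow> ('n \<Rightarrow> 'k) \<Rightarrow> ('n \<Rightarrow> 'k))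
   \<Rightarrow> (('n \<Rightarrow> 'k) \<Rightarrow> 'g) \<Rightarrow> bool" where
  "O_operator br phi beta rho T \<longleftrightarrow>
     T \<circ> beta = phi \<circ> T \<and>
     (\<forall>u v. br (T u) (T v) = T (rho (T u) v - rho (T v) u))"

text \<open>Elements of h\<otimes>h\<otimes>h (h a 'k-vector space with scalar multiplication sc) are
  represented through the canonical injective map h\<otimes>h\<otimes>h \<rightarrow> (h*\<otimes>h*\<otimes>h*)*:
  a finite sum \<Sum>_t a_t \<otimes> b_t \<otimes> c_t is zero iff for all linear functionals f1 f2 f3
  on h, \<Sum>_t f1 a_t * f2 b_t * f3 c_t = 0.\<close>
definition tensor3_zero :: "('k::field \<Rightarrow> 'h \<Rightarrow> 'h) \<Rightarrow> 'i set \<Rightarrow> ('i \<Rightarrow> 'h::ab_group_add)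
    \<Rightarrow> ('i \<Rightarrow> 'h) \<Rightarrow> ('i \<Rightarrow> 'h) \<Rightarrow> bool" where
  "tensor3_zero sc I a b c \<longleftrightarrow>
     (\<forall>f1 f2 f3. klinear sc (*) f1 \<longrightarrow> klinear sc (*) f2 \<longrightarrow> klinear sc (*) f3 \<longrightarrow>
        (\<Sum>t\<in>I. f1 (a t) * f2 (b t) * f3 (c t)) = 0)"

text \<open>[r,r] for r = \<Sum>_{i\<in>I} x_i \<otimes> y_i in the Hom-Lie algebra (h, br, phi), as an
  element of h\<otimes>h\<otimes>h: the sum over (i,j,k) with k\<in>{0,1,2} selecting the three terms.\<close>
definition CHYBE :: "('k::field \<Rightarrow> 'h \<Rightarrow> 'h) \<Rightarrow> ('h::ab_group_add \<Rightarrow> 'h \<Rightarrow> 'h) \<Rightarrow> ('h \<Rightarrow> 'h)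
    \<Rightarrow> 'i set \<Rightarrow> ('i \<Rightarrow> 'h) \<Rightarrow> ('i \<Rightarrow> 'h) \<Rightarrow> bool" where
  "CHYBE sc br phi I x y \<longleftrightarrow>
     tensor3_zero sc (I \<times> I \<times> {0::nat, 1, 2})
       (\<lambda>(i, j, k). if k = 0 then br (x i) (x j) else phi (x i))
       (\<lambda>(i, j, k). if k = 0 then phi (y i) else if k = 1 then br (y i) (x j) else phi (x j))
       (\<lambda>(i, j, k). if k = 2 then br (y i) (y j) else phi (y j))"

text \<open>r = Tbar - \<sigma>(Tbar) = \<Sum>_i v^i \<otimes> T(v_i) - \<Sum>_i T(v_i) \<otimes> v^i, indexed by 'n \<times> bool
  (True: the term v^i \<otimes> T v_i; False: the term (- T v_i) \<otimes> v^i).\<close>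
definition r_left :: "(('n \<Rightarrow> 'k::field) \<Rightarrow> 'g::ab_group_add) \<Rightarrow> 'n \<times> bool \<Rightarrow> 'g \<times> ('n \<Rightarrow> 'k)" where
  "r_left T p = (if snd p then (0, ebas (fst p)) else (- T (ebas (fst p)), 0))"

definition r_right :: "(('n \<Rightarrow> 'k::field) \<Rightarrow> 'g::ab_group_add) \<Rightarrow> 'n \<times> bool \<Rightarrow> 'g \<times> ('n \<Rightarrow> 'k)" where
  "r_right T p = (if snd p then (T (ebas (fst p)), 0) else (0, ebas (fst p)))"

end

theory Submission
  imports Defs
begin

text \<open>Pair [r,r] with linear functionals f1, f2, f3 on g \<oplus> V*. Each f_k splits as
  F_k on g plus pairing with a vector c_k \<in> V. Every leg of r lies either in g or in V*,
  so each of the nine kinds of summand of the pairing is a value of one F_k times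
  coordinates of the other c_l, and summing over the dual bases collapses it by linearity
  to F_k of an element of g. The result is
  F1 (D c2 c3) - F2 (D c1 c3) + F3 (D c1 c2), where
  D u v = [T \<beta> u, T \<beta> v] - \<phi> T \<rho>(\<phi> T \<beta> u) v + \<phi> T \<rho>(\<phi> T \<beta> v) u.
  By T \<beta> = \<phi> T, weak involutivity and multiplicativity of \<phi>,
  D u v = \<phi> ([T u, T v] - T (\<rho>(T u) v - \<rho>(T v) u)), which vanishes because T is an
  \<O>-operator.\<close>

lemma klinear_add: "klinear s1 s2 f \<Longrightarrow> f (x + y) = f x + f y"
  by (simp add: klinear_def)

lemma klinear_scale: "klinear s1 s2 f \<Longrightarrow> f (s1 c x) = s2 c (f x)"
  by (simp add: klinear_def)

lemma klinear_zero: "klinear s1 s2 f \<Longrightarrow> f 0 = 0"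
  by (metis add_cancel_right_right add_0 klinear_add)

lemma klinear_minus: "klinear s1 s2 f \<Longrightarrow> f (- x) = - f x"
  by (metis add.right_inverse klinear_add klinear_zero neg_eq_iff_add_eq_0)

lemma klinear_diff: "klinear s1 s2 f \<Longrightarrow> f (x - y) = f x - f y"
  by (metis diff_conv_add_uminus klinear_add klinear_minus)

lemma klinear_sum: "klinear s1 s2 f \<Longrightarrow> f (\<Sum>i\<in>A. g i) = (\<Sum>i\<in>A. f (g i))"
  by (induction A rule: infinite_finite_induct) (auto simp: klinear_zero klinear_add)

lemma klinear_comp: "klinear s1 s2 f \<Longrightarrow> klinear s2 s3 g \<Longrightarrow> klinear s1 s3 (g \<circ> f)"
  by (simp add: klinear_def)

lemma klinear_coordinate: "klinear s vscale h \<Longrightarrow> klinear s (*) (\<lambda>v. h v j)"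
  by (simp add: klinear_def vscale_def)

lemma sum_apply: "(\<Sum>i\<in>A. g i) x = (\<Sum>i\<in>A. g i x)"
  by (induction A rule: infinite_finite_induct) auto

lemma sum_vscale_ebas: "(\<Sum>i\<in>UNIV. vscale (x i) (ebas i)) = (x :: 'n::finite \<Rightarrow> 'k::field)"
  by (simp add: fun_eq_iff sum_apply vscale_def ebas_def if_distrib cong: if_cong)

lemma klinear_functional_eq_sum:
  fixes h :: "('n::finite \<Rightarrow> 'k::field) \<Rightarrow> 'k"
  assumes "klinear vscale (*) h"
  shows "h x = (\<Sum>i\<in>UNIV. x i * h (ebas i))"
  using klinear_sum[OF assms, of "\<lambda>i. vscale (x i) (ebas i)" UNIV]
  by (simp add: sum_vscale_ebas klinear_scale[OF assms])

lemma sum_bilinear_ebas: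
  fixes B :: "('n::finite \<Rightarrow> 'k::field) \<Rightarrow> ('n \<Rightarrow> 'k) \<Rightarrow> 'k"
  assumes "\<And>v. klinear vscale (*) (\<lambda>u. B u v)" and "\<And>u. klinear vscale (*) (B u)"
  shows "(\<Sum>i\<in>UNIV. \<Sum>j\<in>UNIV. a i * b j * B (ebas i) (ebas j)) = B a b"
proof -
  have "(\<Sum>j\<in>UNIV. a i * b j * B (ebas i) (ebas j)) = a i * B (ebas i) b" for i
    by (simp add: klinear_functional_eq_sum[OF assms(2), of _ b] sum_distrib_left mult.assoc)
  then show ?thesis
    by (simp add: klinear_functional_eq_sum[OF assms(1), of a])
qed

lemma sum_comp_ebas:
  fixes L :: "('n::finite \<Rightarrow> 'k::field) \<Rightarrow> ('n \<Rightarrow> 'k)"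
  assumes "klinear vscale vscale L" and "klinear vscale (*) G"
  shows "(\<Sum>i\<in>UNIV. \<Sum>j\<in>UNIV. a i * L (ebas i) j * G (ebas j)) = G (L a)"
proof -
  have "(\<Sum>i\<in>UNIV. a i * L (ebas i) j) = L a j" for j
    by (simp add: klinear_functional_eq_sum[OF klinear_coordinate[OF assms(1)], of a])
  then have "(\<Sum>i\<in>UNIV. \<Sum>j\<in>UNIV. a i * L (ebas i) j * G (ebas j)) = (\<Sum>j\<in>UNIV. L a j * G (ebas j))"
    using sum.swap[of "\<lambda>i j. a i * L (ebas i) j * G (ebas j)" UNIV UNIV]
    by (simp add: sum_distrib_right[symmetric])
  also have "\<dots> = G (L a)"
    by (simp add: klinear_functional_eq_sum[OF assms(2), of "L a"])
  finally show ?thesis .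
qed

lemma sum_comp_ebas_swap:
  fixes L :: "('n::finite \<Rightarrow> 'k::field) \<Rightarrow> ('n \<Rightarrow> 'k)"
  assumes "klinear vscale vscale L" and "klinear vscale (*) G"
  shows "(\<Sum>i\<in>UNIV. \<Sum>j\<in>UNIV. G (ebas i) * L (ebas j) i * a j) = G (L a)"
  using sum_comp_ebas[OF assms, of a] sum.swap[of "\<lambda>i j. G (ebas i) * L (ebas j) i * a j" UNIV UNIV]
  by (simp add: mult_ac)

lemma pairing_ebas: "pairing (ebas i) v = v i"
  by (simp add: pairing_def ebas_def if_distrib[where f = "\<lambda>z. z * _"] cong: if_cong)

lemma pairing_zero [simp]: "pairing 0 v = 0"
  by (simp add: pairing_def)

lemma pairing_minus [simp]: "pairing (- xi) v = - pairing xi v"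
  by (simp add: pairing_def sum_negf)

lemma pairing_rho_circ_ebas:
  assumes "klinear vscale vscale (rho (phi x))"
  shows "pairing (rho_circ phi rho x (ebas i)) c = - rho (phi x) c i"
  unfolding rho_circ_def pairing_ebas
  by (simp add: pairing_def sum_negf mult.commute
      klinear_functional_eq_sum[OF klinear_coordinate[OF assms], of c])

lemma pairing_dual_map_ebas:
  assumes "klinear vscale vscale beta"
  shows "pairing (dual_map beta (ebas i)) c = beta c i"
  unfolding dual_map_def pairing_ebas
  by (simp add: pairing_def mult.commute
      klinear_functional_eq_sum[OF klinear_coordinate[OF assms], of c])

lemma CHYBE_iff:
  "CHYBE sc br phi I x y \<longleftrightarrow>
     (\<forall>f1 f2 f3. klinear sc (*) f1 \<longrightarrow> klinear sc (*) f2 \<longrightarrow> klinear sc (*) f3 \<longrightarrow>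
       (\<Sum>i\<in>I. \<Sum>j\<in>I.
          f1 (br (x i) (x j)) * f2 (phi (y i)) * f3 (phi (y j))
          + f1 (phi (x i)) * f2 (br (y i) (x j)) * f3 (phi (y j))
          + f1 (phi (x i)) * f2 (phi (x j)) * f3 (br (y i) (y j))) = 0)"
  by (simp add: CHYBE_def tensor3_zero_def sum.cartesian_product' add.assoc)

lemma sum_UNIV_prod_bool:
  "(\<Sum>p\<in>UNIV. h p) = (\<Sum>i\<in>UNIV. h (i, True) + h (i, False))"
  by (simp add: UNIV_Times_UNIV[symmetric] sum.cartesian_product' UNIV_bool add.commute
      del: UNIV_Times_UNIV)

definition dual_coeffs :: "('g::zero \<times> ('n \<Rightarrow> 'k) \<Rightarrow> 'k) \<Rightarrow> 'n \<Rightarrow> 'k::field" where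
  "dual_coeffs f = (\<lambda>j. f (0, ebas j))"

context
  fixes sc :: "'k::field \<Rightarrow> 'g::ab_group_add \<Rightarrow> 'g" and f :: "'g \<times> ('n::finite \<Rightarrow> 'k) \<Rightarrow> 'k"
  assumes vs: "vector_space sc" and f: "klinear (sd_scale sc) (*) f"
begin

lemma sd_functional_fst_klinear: "klinear sc (*) (\<lambda>x. f (x, 0))"
  unfolding klinear_def
proof (intro conjI allI)
  show "f (x + y, 0) = f (x, 0) + f (y, 0)" for x y
    using klinear_add[OF f, of "(x, 0)" "(y, 0)"] by simp
  show "f (sc c x, 0) = c * f (x, 0)" for c x
    using klinear_scale[OF f, of c "(x, 0)"] by (simp add: sd_scale_def vscale_def zero_fun_def)
qed

lemma sd_functional_snd_klinear: "klinear vscale (*) (\<lambda>xi. f (0, xi))"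
  unfolding klinear_def
proof (intro conjI allI)
  show "f (0, xi + eta) = f (0, xi) + f (0, eta)" for xi eta
    using klinear_add[OF f, of "(0, xi)" "(0, eta)"] by simp
  interpret vector_space sc by (rule vs)
  show "f (0, vscale c xi) = c * f (0, xi)" for c xi
    using klinear_scale[OF f, of c "(0, xi)"] by (simp add: sd_scale_def)
qed

lemma sd_functional_split: "f (x, xi) = f (x, 0) + pairing xi (dual_coeffs f)"
proof -
  have "f (x, xi) = f (x, 0) + f (0, xi)"
    using klinear_add[OF f, of "(x, 0)" "(0, xi)"] by simp
  also have "f (0, xi) = pairing xi (dual_coeffs f)"
    by (simp add: klinear_functional_eq_sum[OF sd_functional_snd_klinear, of xi] pairing_def
        dual_coeffs_def)
  finally show ?thesis .
qed

end

definition O_defect ::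
  "('g::ab_group_add \<Rightarrow> 'g \<Rightarrow> 'g) \<Rightarrow> ('g \<Rightarrow> 'g) \<Rightarrow> (('n \<Rightarrow> 'k) \<Rightarrow> ('n \<Rightarrow> 'k))
   \<Rightarrow> ('g \<Rightarrow> ('n \<Rightarrow> 'k) \<Rightarrow> ('n \<Rightarrow> 'k)) \<Rightarrow> (('n \<Rightarrow> 'k) \<Rightarrow> 'g) \<Rightarrow> ('n \<Rightarrow> 'k) \<Rightarrow> ('n \<Rightarrow> 'k) \<Rightarrow> 'g"
  where
  "O_defect br phi beta rho T u v =
     br (T (beta u)) (T (beta v)) - phi (T (rho (phi (T (beta u))) v))
       + phi (T (rho (phi (T (beta v))) u))"

locale hom_lie_rep =
  fixes sc :: "'k::field \<Rightarrow> 'g::ab_group_add \<Rightarrow> 'g"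
    and br :: "'g \<Rightarrow> 'g \<Rightarrow> 'g" and phi :: "'g \<Rightarrow> 'g"
    and beta :: "('n::finite \<Rightarrow> 'k) \<Rightarrow> ('n \<Rightarrow> 'k)"
    and rho :: "'g \<Rightarrow> ('n \<Rightarrow> 'k) \<Rightarrow> ('n \<Rightarrow> 'k)"
  assumes hom_lie: "hom_lie_algebra sc br phi"
    and rep: "hom_rep sc br phi beta rho"
begin

lemma vector_space: "vector_space sc"
  using hom_lie unfolding hom_lie_algebra_def by blast

lemma br_klinear_left: "klinear sc sc (\<lambda>x. br x y)"
  using hom_lie unfolding hom_lie_algebra_def by blast

lemma br_klinear_right: "klinear sc sc (br x)"
  using hom_lie unfolding hom_lie_algebra_def by blast

lemma phi_klinear: "klinear sc sc phi"
  using hom_lie unfolding hom_lie_algebra_def by blast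

lemma phi_br: "phi (br x y) = br (phi x) (phi y)"
  using hom_lie unfolding hom_lie_algebra_def by blast

lemma beta_klinear: "klinear vscale vscale beta"
  using rep unfolding hom_rep_def by blast

lemma rho_klinear: "klinear vscale vscale (rho x)"
  using rep unfolding hom_rep_def by blast

lemma rho_add: "rho (x + y) v = rho x v + rho y v"
  using rep unfolding hom_rep_def by blast

lemma rho_scale: "rho (sc c x) v = vscale c (rho x v)"
  using rep unfolding hom_rep_def by blast

lemma rho_zero [simp]: "rho 0 v = 0"
  by (metis add_cancel_right_right add_0 rho_add)

lemma rho_minus [simp]: "rho (- x) v = - rho x v"
  by (metis add.right_inverse rho_add rho_zero neg_eq_iff_add_eq_0)

lemma br_zero [simp]: "br 0 y = 0" "br x 0 = 0"
  using klinear_zero[OF br_klinear_left] klinear_zero[OF br_klinear_right] by auto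

lemma br_minus [simp]: "br (- x) y = - br x y" "br x (- y) = - br x y"
  using klinear_minus[OF br_klinear_left] klinear_minus[OF br_klinear_right] by auto

lemma phi_zero [simp]: "phi 0 = 0"
  using klinear_zero[OF phi_klinear] .

lemma phi_minus [simp]: "phi (- x) = - phi x"
  using klinear_minus[OF phi_klinear] .

lemma rho_circ_zero [simp]: "rho_circ phi rho x 0 = 0" "rho_circ phi rho 0 xi = 0"
  by (simp_all add: rho_circ_def zero_fun_def pairing_def)

lemma dual_map_zero [simp]: "dual_map beta 0 = 0"
  by (simp add: dual_map_def zero_fun_def pairing_def)

context
  fixes T :: "('n \<Rightarrow> 'k) \<Rightarrow> 'g"
  assumes T_klinear: "klinear vscale sc T"
begin

lemma klinear_comp_phi_T: "klinear sc (*) F \<Longrightarrow> klinear vscale (*) (\<lambda>v. F (phi (T v)))"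
  using klinear_comp[OF klinear_comp[OF T_klinear phi_klinear]] by (simp add: comp_def)

lemma klinear_comp_br_T_left: "klinear sc (*) F \<Longrightarrow> klinear vscale (*) (\<lambda>u. F (br (T u) y))"
  using klinear_comp[OF klinear_comp[OF T_klinear br_klinear_left]] by (simp add: comp_def)

lemma klinear_comp_br_T_right: "klinear sc (*) F \<Longrightarrow> klinear vscale (*) (\<lambda>v. F (br x (T v)))"
  using klinear_comp[OF klinear_comp[OF T_klinear br_klinear_right]] by (simp add: comp_def)

lemma rho_phi_T_klinear: "klinear vscale vscale (\<lambda>a. rho (phi (T a)) c)"
  unfolding klinear_def
  by (simp add: klinear_add[OF T_klinear] klinear_add[OF phi_klinear] rho_add
      klinear_scale[OF T_klinear] klinear_scale[OF phi_klinear] rho_scale)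

lemma sum_br_T_ebas:
  "klinear sc (*) F \<Longrightarrow>
     (\<Sum>i\<in>UNIV. \<Sum>j\<in>UNIV. a i * b j * F (br (T (ebas i)) (T (ebas j)))) = F (br (T a) (T b))"
  by (rule sum_bilinear_ebas[where B = "\<lambda>u v. F (br (T u) (T v))"])
    (simp_all add: klinear_comp_br_T_left klinear_comp_br_T_right)

lemma sum_rho_phi_T_ebas:
  assumes "klinear sc (*) F"
  shows "(\<Sum>i\<in>UNIV. \<Sum>j\<in>UNIV. a i * rho (phi (T (ebas i))) c j * F (phi (T (ebas j))))
      = F (phi (T (rho (phi (T a)) c)))"
    and "(\<Sum>i\<in>UNIV. \<Sum>j\<in>UNIV. F (phi (T (ebas i))) * rho (phi (T (ebas j))) c i * a j)
      = F (phi (T (rho (phi (T a)) c)))"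
  by (rule sum_comp_ebas[OF rho_phi_T_klinear klinear_comp_phi_T[OF assms]],
      rule sum_comp_ebas_swap[OF rho_phi_T_klinear klinear_comp_phi_T[OF assms]])

lemma r_bracket_eval_in_coordinates:
  defines "sbr \<equiv> sd_bracket br phi rho" and "stw \<equiv> sd_twist phi beta"
    and "x \<equiv> r_left T" and "y \<equiv> r_right T"
  assumes F1: "klinear sc (*) F1" and F2: "klinear sc (*) F2" and F3: "klinear sc (*) F3"
    and f_split: "\<And>x xi. f1 (x, xi) = F1 x + pairing xi c1"
      "\<And>x xi. f2 (x, xi) = F2 x + pairing xi c2" "\<And>x xi. f3 (x, xi) = F3 x + pairing xi c3"
  shows "(\<Sum>i\<in>UNIV. \<Sum>j\<in>UNIV.
      f1 (sbr (x i) (x j)) * f2 (stw (y i)) * f3 (stw (y j))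
      + f1 (stw (x i)) * f2 (sbr (y i) (x j)) * f3 (stw (y j))
      + f1 (stw (x i)) * f2 (stw (x j)) * f3 (sbr (y i) (y j)))
    = F1 (O_defect br phi beta rho T c2 c3) - F2 (O_defect br phi beta rho T c1 c3)
      + F3 (O_defect br phi beta rho T c1 c2)"
proof -
  note F_simps = klinear_zero[OF F1] klinear_zero[OF F2] klinear_zero[OF F3]
    klinear_minus[OF F1] klinear_minus[OF F2] klinear_minus[OF F3]
  note collected =
    sum_br_T_ebas[OF F3, where a = "beta c1" and b = "beta c2"]
    sum_rho_phi_T_ebas(1)[OF F3, where a = "beta c1" and c = c2]
    sum_rho_phi_T_ebas(2)[OF F2, where a = "beta c3" and c = c1]
    sum_br_T_ebas[OF F2, where a = "beta c1" and b = "beta c3"]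
    sum_rho_phi_T_ebas(1)[OF F2, where a = "beta c1" and c = c3]
    sum_rho_phi_T_ebas(1)[OF F3, where a = "beta c2" and c = c1]
    sum_rho_phi_T_ebas(2)[OF F1, where a = "beta c2" and c = c3]
    sum_br_T_ebas[OF F1, where a = "beta c2" and b = "beta c3"]
    sum_rho_phi_T_ebas(2)[OF F1, where a = "beta c3" and c = c2]
  \<comment> \<open>normalised by \<open>mult_ac\<close> exactly as the goal will be, so that they can rewrite it\<close>
  note collected = collected[simplified mult_ac]
  have "(\<Sum>i\<in>UNIV. \<Sum>j\<in>UNIV.
      f1 (sbr (x i) (x j)) * f2 (stw (y i)) * f3 (stw (y j))
      + f1 (stw (x i)) * f2 (sbr (y i) (x j)) * f3 (stw (y j))
      + f1 (stw (x i)) * f2 (stw (x j)) * f3 (sbr (y i) (y j)))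
    = (F1 (br (T (beta c2)) (T (beta c3)))
        - F1 (phi (T (rho (phi (T (beta c2))) c3))) + F1 (phi (T (rho (phi (T (beta c3))) c2))))
      - (F2 (br (T (beta c1)) (T (beta c3)))
        - F2 (phi (T (rho (phi (T (beta c1))) c3))) + F2 (phi (T (rho (phi (T (beta c3))) c1))))
      + (F3 (br (T (beta c1)) (T (beta c2)))
        - F3 (phi (T (rho (phi (T (beta c1))) c2))) + F3 (phi (T (rho (phi (T (beta c2))) c1))))"
    unfolding sum_UNIV_prod_bool x_def y_def sbr_def stw_def
    apply (simp add: r_left_def r_right_def sd_bracket_def sd_twist_def f_split F_simps
        pairing_rho_circ_ebas[OF rho_klinear] pairing_dual_map_ebas[OF beta_klinear])
    apply (simp only: sum.distrib sum_subtractf sum_negf)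
    apply (simp add: mult_ac)
    apply (simp only: collected)
    apply (simp add: algebra_simps)
    done
  then show ?thesis
    by (simp add: O_defect_def klinear_diff[OF F1] klinear_diff[OF F2] klinear_diff[OF F3]
        klinear_add[OF F1] klinear_add[OF F2] klinear_add[OF F3])
qed

lemma r_bracket_eval_eq_O_defect:
  assumes "klinear (sd_scale sc) (*) f1" and "klinear (sd_scale sc) (*) f2"
    and "klinear (sd_scale sc) (*) f3"
  shows "(\<Sum>i\<in>UNIV. \<Sum>j\<in>UNIV.
      f1 (sd_bracket br phi rho (r_left T i) (r_left T j))
        * f2 (sd_twist phi beta (r_right T i)) * f3 (sd_twist phi beta (r_right T j))
      + f1 (sd_twist phi beta (r_left T i)) * f2 (sd_bracket br phi rho (r_right T i) (r_left T j))
        * f3 (sd_twist phi beta (r_right T j))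
      + f1 (sd_twist phi beta (r_left T i)) * f2 (sd_twist phi beta (r_left T j))
        * f3 (sd_bracket br phi rho (r_right T i) (r_right T j)))
    = f1 (O_defect br phi beta rho T (dual_coeffs f2) (dual_coeffs f3), 0)
      - f2 (O_defect br phi beta rho T (dual_coeffs f1) (dual_coeffs f3), 0)
      + f3 (O_defect br phi beta rho T (dual_coeffs f1) (dual_coeffs f2), 0)"
  using r_bracket_eval_in_coordinates[OF
      sd_functional_fst_klinear[OF vector_space assms(1)]
      sd_functional_fst_klinear[OF vector_space assms(2)]
      sd_functional_fst_klinear[OF vector_space assms(3)]
      sd_functional_split[OF vector_space assms(1)]
      sd_functional_split[OF vector_space assms(2)]
      sd_functional_split[OF vector_space assms(3)]]
  .

lemma O_defect_eq_0:
  assumes "weakly_involutive phi rho" and "O_operator br phi beta rho T"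
  shows "O_defect br phi beta rho T u v = 0"
proof -
  have T_beta: "T (beta w) = phi (T w)" for w
    using assms(2) by (simp add: O_operator_def fun_eq_iff)
  have rho_phi_phi: "rho (phi (phi x)) = rho x" for x
    using assms(1) by (simp add: weakly_involutive_def)
  have "O_defect br phi beta rho T u v
      = phi (br (T u) (T v)) - phi (T (rho (T u) v)) + phi (T (rho (T v) u))"
    by (simp add: O_defect_def T_beta rho_phi_phi phi_br)
  also have "\<dots> = phi (br (T u) (T v) - T (rho (T u) v - rho (T v) u))"
    by (simp add: klinear_diff[OF phi_klinear] klinear_diff[OF T_klinear])
  also have "\<dots> = 0"
    using assms(2) by (simp add: O_operator_def)
  finally show ?thesis .
qed

end

end

theorem theorem5p8:
  fixes sc :: "'k::field \<Rightarrow> 'g::ab_group_add \<Rightarrow> 'g"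
    and br :: "'g \<Rightarrow> 'g \<Rightarrow> 'g" and phi :: "'g \<Rightarrow> 'g"
    and beta :: "('n::finite \<Rightarrow> 'k) \<Rightarrow> ('n \<Rightarrow> 'k)"
    and rho :: "'g \<Rightarrow> ('n \<Rightarrow> 'k) \<Rightarrow> ('n \<Rightarrow> 'k)"
    and T :: "('n \<Rightarrow> 'k) \<Rightarrow> 'g"
  assumes "hom_lie_algebra sc br phi"
    and "hom_rep sc br phi beta rho"
    and "weakly_involutive phi rho"
    and "klinear vscale sc T"
    and "T \<circ> beta = phi \<circ> T"
    and "O_operator br phi beta rho T"
  shows "CHYBE (sd_scale sc) (sd_bracket br phi rho) (sd_twist phi beta)
           UNIV (r_left T) (r_right T)"
proof -
  \<comment> \<open>the hypothesis \<open>T \<circ> beta = phi \<circ> T\<close> is already part of \<open>O_operator\<close>\<close>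
  interpret hom_lie_rep sc br phi beta rho
    using assms(1,2) by unfold_locales
  have "O_defect br phi beta rho T u v = 0" for u v
    using O_defect_eq_0[OF assms(4,3,6)] .
  then show ?thesis
    unfolding CHYBE_iff
    by (simp add: r_bracket_eval_eq_O_defect[OF assms(4)] zero_prod_def[symmetric]
        klinear_zero[of "sd_scale sc" "(*)"])
qed

end
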